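(* Let $\Delta=\prod_{1\le i<j\le n}(x_i-x_j)$ and, for $0\le k\le n-1$ and $n-1\ge m_1>m_2>\dots>m_k\ge1$, let $\omega_{m_1,\dots,m_k}=d_{m_1}d_{m_2}\cdots d_{m_k}\Delta\in\Omega_n$ (with $\omega=\Delta$ when $k=0$). Then $\omega_{m_1,\dots,m_k}\in H_{\binom n2-\sum_i m_i,\,k}$ and $\sigma\omega_{m_1,\dots,m_k}=\mathrm{sgn}(\sigma)\omega_{m_1,\dots,m_k}$ for all $\sigma\in S_n$.
   Context: $\Omega_n=\mathbb{R}[x_1,\dots,x_n]\otimes\wedge\mathbb{R}^n$, with $S_n$ permuting indices of the $x_i$ and $dx_i$ simultaneously. With $\partial_i=\partial/\partial x_i$: $d_j(h\,dx_{i_1}\wedge\cdots\wedge dx_{i_k})=\sum_l(\partial_l^jh)\,dx_l\wedge dx_{i_1}\wedge\cdots\wedge dx_{i_k}$ and $\delta_l(h\,dx_{i_1}\wedge\cdots\wedge dx_{i_k})=\sum_j(\partial_j^lh)\,\iota(dx_j)(dx_{i_1}\wedge\cdots\wedge dx_{i_k})$, where $\iota(dx_j)$ is contraction ($0$ if $j\notin\{i_1<\dots<i_k\}$, $(-1)^{r-1}dx_{i_1}\wedge\cdots\widehat{dx_{i_r}}\cdots\wedge dx_{i_k}$ if $j=i_r$). A polynomial $f$ is $S_n$-harmonic if $\sum_i\partial_i^kf=0$ for $k=1,\dots,n$. $H_{r,s}$ is the space of $s$-forms $\sum_{i_1<\dots<i_s}h_{i_1\dots i_s}dx_{i_1}\wedge\cdots\wedge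 dx_{i_s}$ with every $h_{i_1\dots i_s}$ $S_n$-harmonic and homogeneous of degree $r$, and annihilated by $\delta_j$ for $j=0,\dots,n-1$. *)

theory Defs
  imports Complex_Main "HOL-Library.Poly_Mapping" "HOL-Combinatorics.Permutations"
begin

text \<open>Polynomials in variables x_0, x_1, ... (index i stands for x_(i+1) of the paper)
  with real coefficients: monomials are exponent vectors nat =>0 nat.\<close>
type_synonym mono = "nat \<Rightarrow>\<^sub>0 nat"
type_synonym rpoly = "mono \<Rightarrow>\<^sub>0 real"

text \<open>Differential forms: coefficient of dx_I for each finite index set I
  (the increasingly ordered wedge dx_(i_1) ^ ... ^ dx_(i_k)).\<close>
type_synonym dform = "nat set \<Rightarrow> rpoly"

definition Xv :: "nat \<Rightarrow> rpoly" where
  "Xv i = Poly_Mapping.single (Poly_Mapping.single i 1) 1"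

definition pderiv_var :: "nat \<Rightarrow> rpoly \<Rightarrow> rpoly" where
  "pderiv_var l p = (\<Sum>m\<in>Poly_Mapping.keys p.
      Poly_Mapping.single (m - Poly_Mapping.single l (1::nat))
        (real (Poly_Mapping.lookup (m::mono) l) * Poly_Mapping.lookup (p::rpoly) m))"

definition mono_deg :: "mono \<Rightarrow> nat" where
  "mono_deg m = (\<Sum>i\<in>Poly_Mapping.keys m. Poly_Mapping.lookup m i)"

definition homogeneous :: "nat \<Rightarrow> rpoly \<Rightarrow> bool" where
  "homogeneous r p \<longleftrightarrow> (\<forall>m\<in>Poly_Mapping.keys p. mono_deg m = r)"

definition poly_in_vars :: "nat \<Rightarrow> rpoly \<Rightarrow> bool" where
  "poly_in_vars n p \<longleftrightarrow> (\<forall>m\<in>Poly_Mapping.keys p. Poly_Mapping.keys m \<subseteq> {..<n})"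

definition Sn_harmonic :: "nat \<Rightarrow> rpoly \<Rightarrow> bool" where
  "Sn_harmonic n f \<longleftrightarrow> (\<forall>k\<in>{1..n}. (\<Sum>i<n. (pderiv_var i ^^ k) f) = 0)"

text \<open>Sign of dx_l moved past the elements of I smaller than l.\<close>
definition wsign :: "nat set \<Rightarrow> nat \<Rightarrow> rpoly" where
  "wsign I l = (-1) ^ card {i\<in>I. i < l}"

definition in_Omega :: "nat \<Rightarrow> dform \<Rightarrow> bool" where
  "in_Omega n \<omega> \<longleftrightarrow> (\<forall>I. \<omega> I \<noteq> 0 \<longrightarrow> I \<subseteq> {..<n}) \<and> (\<forall>I. poly_in_vars n (\<omega> I))"

text \<open>d_j(h dx_I) = sum_l (d_l^j h) dx_l ^ dx_I\<close>
definition dop :: "nat \<Rightarrow> nat \<Rightarrow> dform \<Rightarrow> dform" where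
  "dop n j \<omega> J = (if J \<subseteq> {..<n} then
      (\<Sum>l\<in>J. wsign (J - {l}) l * (pderiv_var l ^^ j) (\<omega> (J - {l}))) else 0)"

text \<open>delta_l(h dx_I) = sum_j (d_j^l h) iota(dx_j) dx_I\<close>
definition deltaop :: "nat \<Rightarrow> nat \<Rightarrow> dform \<Rightarrow> dform" where
  "deltaop n l \<omega> J = (if J \<subseteq> {..<n} then
      (\<Sum>j\<in>{..<n} - J. wsign J j * (pderiv_var j ^^ l) (\<omega> (insert j J))) else 0)"

definition Hspace :: "nat \<Rightarrow> nat \<Rightarrow> nat \<Rightarrow> dform set" where
  "Hspace n r s = {\<omega>. in_Omega n \<omega>
      \<and> (\<forall>I. \<omega> I \<noteq> 0 \<longrightarrow> card I = s)
      \<and> (\<forall>I. Sn_harmonic n (\<omega> I) \<and> homogeneous r (\<omega> I))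
      \<and> (\<forall>j<n. deltaop n j \<omega> = (\<lambda>_. 0))}"

definition Delta :: "nat \<Rightarrow> rpoly" where
  "Delta n = (\<Prod>(i, j)\<in>{(i, j). i < j \<and> j < n}. Xv i - Xv j)"

definition Delta_form :: "nat \<Rightarrow> dform" where
  "Delta_form n I = (if I = {} then Delta n else 0)"

definition omega_form :: "nat \<Rightarrow> nat list \<Rightarrow> dform" where
  "omega_form n ms = foldr (dop n) ms (Delta_form n)"

definition mono_perm :: "(nat \<Rightarrow> nat) \<Rightarrow> mono \<Rightarrow> mono" where
  "mono_perm \<sigma> m = (\<Sum>i\<in>Poly_Mapping.keys m. Poly_Mapping.single (\<sigma> i) (Poly_Mapping.lookup m i))"

definition poly_perm :: "(nat \<Rightarrow> nat) \<Rightarrow> rpoly \<Rightarrow> rpoly" where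
  "poly_perm \<sigma> p = (\<Sum>m\<in>Poly_Mapping.keys p. Poly_Mapping.single (mono_perm \<sigma> m) (Poly_Mapping.lookup p m))"

text \<open>sign of reordering dx_(sigma i_1) ^ ... ^ dx_(sigma i_k) increasingly\<close>
definition reorder_sign :: "(nat \<Rightarrow> nat) \<Rightarrow> nat set \<Rightarrow> rpoly" where
  "reorder_sign \<sigma> I = (-1) ^ card {(a, b). a \<in> I \<and> b \<in> I \<and> a < b \<and> \<sigma> b < \<sigma> a}"

text \<open>sigma (h dx_(i_1) ^ ... ^ dx_(i_k)) = (sigma h) dx_(sigma i_1) ^ ... ^ dx_(sigma i_k)\<close>
definition form_perm :: "nat \<Rightarrow> (nat \<Rightarrow> nat) \<Rightarrow> dform \<Rightarrow> dform" where
  "form_perm n \<sigma> \<omega> J = (if J \<subseteq> {..<n} then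
      reorder_sign \<sigma> (inv \<sigma> ` J) * poly_perm \<sigma> (\<omega> (inv \<sigma> ` J)) else 0)"

end

theory Submission
  imports Defs
begin

text \<open>
  Write \<open>p\<^sub>k(\<partial>) = \<Sum>\<^sub>i \<partial>\<^sub>i\<^sup>k\<close>. With the sign conventions of \<open>d\<^sub>m\<close> and \<open>\<delta>\<^sub>l\<close> all cross terms cancel,
  leaving \<open>\<delta>\<^sub>l d\<^sub>m + d\<^sub>m \<delta>\<^sub>l = p\<^bsub>l+m\<^esub>(\<partial>)\<close> acting coefficientwise. The Vandermonde product \<open>\<Delta>\<close> is alternating,
  so for \<open>k \<ge> 1\<close> the polynomial \<open>p\<^sub>k(\<partial>) \<Delta>\<close> is alternating of degree below \<open>n choose 2\<close>; it
  vanishes, because a monomial of a nonzero alternating polynomial has pairwise distinct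
  exponents and hence degree at least \<open>0 + 1 + \<dots> + (n - 1)\<close>. Since \<open>p\<^sub>k(\<partial>)\<close> commutes with
  every \<open>\<partial>\<^sub>j\<close>, all coefficients of all \<open>\<omega>\<close> are killed by every \<open>p\<^sub>k(\<partial>)\<close>, \<open>k \<ge> 1\<close>, and
  inductively, for \<open>\<omega> = d\<^sub>m \<omega>'\<close>, \<open>\<delta>\<^sub>l \<omega> = p\<^bsub>l+m\<^esub>(\<partial>) \<omega>' - d\<^sub>m \<delta>\<^sub>l \<omega>' = 0\<close>. Equivariance follows from
  \<open>\<sigma> \<Delta> = sgn \<sigma> \<Delta>\<close> and \<open>\<sigma> d\<^sub>m = d\<^sub>m \<sigma>\<close>.
\<close>

abbreviation lookup :: "('a \<Rightarrow>\<^sub>0 'b::zero) \<Rightarrow> 'a \<Rightarrow> 'b" where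
  "lookup \<equiv> Poly_Mapping.lookup"

abbreviation keys :: "('a \<Rightarrow>\<^sub>0 'b::zero) \<Rightarrow> 'a set" where
  "keys \<equiv> Poly_Mapping.keys"

text \<open>Written with \<open>Suc 0\<close>, the simp normal form of \<open>1 :: nat\<close>, so that rules about it still
  match after simplification.\<close>

abbreviation var_mono :: "nat \<Rightarrow> mono" where
  "var_mono l \<equiv> Poly_Mapping.single l (Suc 0)"

lemma mono_eq_iff: "(a::mono) = b \<longleftrightarrow> (\<forall>i. lookup a i = lookup b i)"
  by (simp add: poly_mapping_eq_iff fun_eq_iff)

lemma mono_diff_var_add:
  assumes "lookup (m::mono) l \<noteq> 0"
  shows "m - var_mono l + var_mono l = m"
  using assms by (simp add: mono_eq_iff lookup_add lookup_minus lookup_single when_def)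

lemma sum_keys_superset:
  fixes g :: "'a \<Rightarrow> 'b::zero \<Rightarrow> 'c::comm_monoid_add"
  assumes "finite S" "keys p \<subseteq> S" "\<And>m. g m 0 = 0"
  shows "(\<Sum>m\<in>keys p. g m (lookup p m)) = (\<Sum>m\<in>S. g m (lookup p m))"
  by (rule sum.mono_neutral_left) (use assms in \<open>auto simp: in_keys_iff\<close>)

lemma sum_keys_add:
  fixes g :: "'a \<Rightarrow> 'b::monoid_add \<Rightarrow> 'c::comm_monoid_add"
  assumes zero: "\<And>m. g m 0 = 0" and add: "\<And>m x y. g m (x + y) = g m x + g m y"
  shows "(\<Sum>m\<in>keys (p + q). g m (lookup (p + q) m)) =
    (\<Sum>m\<in>keys p. g m (lookup p m)) + (\<Sum>m\<in>keys q. g m (lookup q m))"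
proof -
  let ?S = "keys p \<union> keys q"
  have "(\<Sum>m\<in>keys (p + q). g m (lookup (p + q) m)) = (\<Sum>m\<in>?S. g m (lookup (p + q) m))"
    by (rule sum_keys_superset) (auto simp: keys_add zero)
  also have "\<dots> = (\<Sum>m\<in>?S. g m (lookup p m)) + (\<Sum>m\<in>?S. g m (lookup q m))"
    by (simp add: lookup_add add sum.distrib)
  also have "\<dots> = (\<Sum>m\<in>keys p. g m (lookup p m)) + (\<Sum>m\<in>keys q. g m (lookup q m))"
    using sum_keys_superset[of ?S p g] sum_keys_superset[of ?S q g] zero by auto
  finally show ?thesis .
qed

lemma sum_keys_single:
  assumes "\<And>m. g m 0 = 0"
  shows "(\<Sum>m\<in>keys (Poly_Mapping.single a c). g m (lookup (Poly_Mapping.single a c) m)) = g a c"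
  using assms by (cases "c = 0") simp_all

lemma sum_single_lookup: "(\<Sum>m\<in>keys p. Poly_Mapping.single m (lookup p m)) = p"
  by (rule poly_mapping_eqI) (simp add: lookup_sum lookup_single when_def in_keys_iff)

lemma sum_closed:
  assumes "Q 0" "\<And>x y. Q x \<Longrightarrow> Q y \<Longrightarrow> Q (x + y)" "\<And>x. x \<in> A \<Longrightarrow> Q (f x)"
  shows "Q (sum f A)"
  using assms(3) by (induction A rule: infinite_finite_induct) (simp_all add: assms(1,2))

section \<open>Partial derivatives\<close>

lemma lookup_pderiv_var:
  "lookup (pderiv_var l p) a = real (lookup a l + 1) * lookup p (a + var_mono l)"
proof -
  have "lookup (Poly_Mapping.single (m - var_mono l) (real (lookup m l) * lookup p m)) a =
      (if m = a + var_mono l then real (lookup a l + 1) * lookup p m else 0)" for m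
  proof (cases "lookup m l = 0")
    case True
    then have "m \<noteq> a + var_mono l" by (auto simp: lookup_add)
    then show ?thesis using True by (simp add: lookup_single)
  next
    case False
    then have "m - var_mono l = a \<longleftrightarrow> m = a + var_mono l"
      using mono_diff_var_add[OF False] by auto
    then show ?thesis by (auto simp: lookup_single lookup_add)
  qed
  then show ?thesis
    unfolding pderiv_var_def lookup_sum by (simp add: sum.delta in_keys_iff)
qed

interpretation pderiv_var: additive "pderiv_var l"
  by standard (rule poly_mapping_eqI, simp add: lookup_pderiv_var lookup_add distrib_left)

lemma additive_funpow:
  fixes f :: "'a::ab_group_add \<Rightarrow> 'a"
  assumes "additive f"
  shows "additive (f ^^ k)"
proof (induction k)
  case (Suc k)
  show ?case
    by unfold_locales (simp add: additive.add[OF assms] additive.add[OF Suc])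
qed (unfold_locales, simp)

interpretation pderiv_var_pow: additive "pderiv_var l ^^ k"
  by (rule additive_funpow) (rule pderiv_var.additive_axioms)

lemma additive_minus_one_power_mult:
  fixes f :: "'a::ring_1 \<Rightarrow> 'b::ring_1"
  assumes "additive f"
  shows "f ((-1) ^ c * x) = (-1) ^ c * f x"
  using additive.minus[OF assms] by (simp add: minus_one_power_iff)

lemma funpow_commute_funpow:
  assumes "\<And>x. f (g x) = g (f x)"
  shows "(f ^^ k) ((g ^^ m) x) = (g ^^ m) ((f ^^ k) x)"
proof -
  have "(f ^^ k) (g y) = g ((f ^^ k) y)" for y
    by (induction k) (simp_all add: assms)
  then show ?thesis
    by (induction m) simp_all
qed

lemma pderiv_var_commute: "pderiv_var i (pderiv_var j p) = pderiv_var j (pderiv_var i p)"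
proof (rule poly_mapping_eqI)
  have "a + var_mono j + var_mono i = a + var_mono i + var_mono j" for a
    by (simp add: ac_simps)
  then show "lookup (pderiv_var i (pderiv_var j p)) a = lookup (pderiv_var j (pderiv_var i p)) a" for a
    by (cases "i = j") (simp_all add: lookup_pderiv_var lookup_add lookup_single when_def)
qed

lemma pderiv_var_pow_commute:
  "(pderiv_var i ^^ k) ((pderiv_var j ^^ m) p) = (pderiv_var j ^^ m) ((pderiv_var i ^^ k) p)"
  by (rule funpow_commute_funpow) (rule pderiv_var_commute)

lemma keys_pderiv_var: "a \<in> keys (pderiv_var l p) \<Longrightarrow> a + var_mono l \<in> keys p"
  by (auto simp: in_keys_iff lookup_pderiv_var)

section \<open>Variables and degrees\<close>

lemma poly_in_vars_zero: "poly_in_vars n 0"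
  by (simp add: poly_in_vars_def)

lemma poly_in_vars_add: "poly_in_vars n p \<Longrightarrow> poly_in_vars n q \<Longrightarrow> poly_in_vars n (p + q)"
  unfolding poly_in_vars_def using keys_add[of p q] by blast

lemma poly_in_vars_uminus: "poly_in_vars n p \<Longrightarrow> poly_in_vars n (- p)"
  by (simp add: poly_in_vars_def)

lemma poly_in_vars_diff: "poly_in_vars n p \<Longrightarrow> poly_in_vars n q \<Longrightarrow> poly_in_vars n (p - q)"
  unfolding poly_in_vars_def using keys_diff[of p q] by blast

lemma poly_in_vars_mult:
  assumes "poly_in_vars n p" "poly_in_vars n q"
  shows "poly_in_vars n (p * q)"
  unfolding poly_in_vars_def
proof
  fix c assume "c \<in> keys (p * q)"
  then obtain a b where "c = a + b" "a \<in> keys p" "b \<in> keys q"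
    using keys_mult by blast
  then show "keys c \<subseteq> {..<n}"
    using assms keys_add[of a b] unfolding poly_in_vars_def by blast
qed

lemma poly_in_vars_prod: "(\<And>x. x \<in> A \<Longrightarrow> poly_in_vars n (f x)) \<Longrightarrow> poly_in_vars n (prod f A)"
  by (induction A rule: infinite_finite_induct) (simp_all add: poly_in_vars_mult poly_in_vars_def[of n 1])

lemma poly_in_vars_Xv: "i < n \<Longrightarrow> poly_in_vars n (Xv i)"
  by (simp add: poly_in_vars_def Xv_def)

lemma poly_in_vars_pderiv_var:
  assumes "poly_in_vars n p"
  shows "poly_in_vars n (pderiv_var l p)"
  unfolding poly_in_vars_def
proof
  fix a assume "a \<in> keys (pderiv_var l p)"
  then have "a + var_mono l \<in> keys p"
    by (rule keys_pderiv_var)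
  moreover have "keys a \<subseteq> keys (a + var_mono l)"
    by (auto simp: in_keys_iff lookup_add)
  ultimately show "keys a \<subseteq> {..<n}"
    using assms by (auto simp: poly_in_vars_def)
qed

lemma poly_in_vars_pderiv_var_pow: "poly_in_vars n p \<Longrightarrow> poly_in_vars n ((pderiv_var l ^^ k) p)"
  by (induction k) (simp_all add: poly_in_vars_pderiv_var)

lemma mono_deg_superset:
  "finite S \<Longrightarrow> keys a \<subseteq> S \<Longrightarrow> mono_deg a = (\<Sum>i\<in>S. lookup a i)"
  unfolding mono_deg_def by (rule sum.mono_neutral_left) (auto simp: in_keys_iff)

lemma mono_deg_add: "mono_deg (a + b) = mono_deg a + mono_deg b"
  using mono_deg_superset[of "keys a \<union> keys b"] keys_add[of a b]
  by (simp add: lookup_add sum.distrib)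

lemma mono_deg_var_mono: "mono_deg (var_mono l) = 1"
  by (simp add: mono_deg_def)

lemma homogeneous_zero: "homogeneous r 0"
  by (simp add: homogeneous_def)

lemma homogeneous_add: "homogeneous r p \<Longrightarrow> homogeneous r q \<Longrightarrow> homogeneous r (p + q)"
  unfolding homogeneous_def using keys_add[of p q] by blast

lemma homogeneous_uminus: "homogeneous r p \<Longrightarrow> homogeneous r (- p)"
  by (simp add: homogeneous_def)

lemma homogeneous_diff: "homogeneous r p \<Longrightarrow> homogeneous r q \<Longrightarrow> homogeneous r (p - q)"
  unfolding homogeneous_def using keys_diff[of p q] by blast

lemma homogeneous_mult:
  "homogeneous r p \<Longrightarrow> homogeneous s q \<Longrightarrow> homogeneous (r + s) (p * q)"
  unfolding homogeneous_def using keys_mult[of p q] by (fastforce simp: mono_deg_add)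

lemma homogeneous_prod:
  "finite A \<Longrightarrow> (\<And>x. x \<in> A \<Longrightarrow> homogeneous 1 (f x)) \<Longrightarrow> homogeneous (card A) (prod f A)"
proof (induction A rule: finite_induct)
  case empty
  then show ?case by (simp add: homogeneous_def mono_deg_def)
next
  case (insert x F)
  then show ?case using homogeneous_mult[of 1 "f x" "card F" "prod f F"] by simp
qed

lemma homogeneous_Xv: "homogeneous 1 (Xv i)"
  by (simp add: homogeneous_def Xv_def mono_deg_var_mono)

lemma mono_deg_keys_pderiv_var_pow:
  "homogeneous r p \<Longrightarrow> a \<in> keys ((pderiv_var l ^^ k) p) \<Longrightarrow> mono_deg a + k = r"
proof (induction k arbitrary: a)
  case (Suc k)
  then have "mono_deg (a + var_mono l) + k = r"
    using keys_pderiv_var by auto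
  then show ?case by (simp add: mono_deg_add mono_deg_var_mono)
qed (simp add: homogeneous_def)

lemma homogeneous_pderiv_var_pow:
  "homogeneous r p \<Longrightarrow> homogeneous (r - k) ((pderiv_var l ^^ k) p)"
  using mono_deg_keys_pderiv_var_pow unfolding homogeneous_def by (metis add_diff_cancel_right')

section \<open>Permuting the variables\<close>

lemma mono_perm_add: "mono_perm \<sigma> (a + b) = mono_perm \<sigma> a + mono_perm \<sigma> b"
  unfolding mono_perm_def by (rule sum_keys_add) (simp_all add: single_add)

lemma mono_perm_zero: "mono_perm \<sigma> 0 = 0"
  by (simp add: mono_perm_def)

lemma mono_perm_sum: "mono_perm \<sigma> (sum f A) = (\<Sum>x\<in>A. mono_perm \<sigma> (f x))"
  by (induction A rule: infinite_finite_induct) (simp_all add: mono_perm_zero mono_perm_add)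

lemma mono_perm_single: "mono_perm \<sigma> (Poly_Mapping.single i k) = Poly_Mapping.single (\<sigma> i) k"
  unfolding mono_perm_def by (rule sum_keys_single) simp

lemma mono_perm_id: "mono_perm id m = m"
  unfolding mono_perm_def by (simp add: sum_single_lookup)

lemma mono_perm_comp: "mono_perm (\<sigma> \<circ> \<tau>) m = mono_perm \<sigma> (mono_perm \<tau> m)"
  by (simp add: mono_perm_def[of _ m] mono_perm_sum mono_perm_single)

lemma lookup_mono_perm: "inj \<sigma> \<Longrightarrow> lookup (mono_perm \<sigma> m) (\<sigma> i) = lookup m i"
  by (simp add: mono_perm_def lookup_sum lookup_single when_def inj_eq in_keys_iff)

lemma inj_mono_perm: "inj \<sigma> \<Longrightarrow> inj (mono_perm \<sigma>)"
  by (rule injI) (metis lookup_mono_perm poly_mapping_eqI)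

lemma mono_perm_inv: "bij \<sigma> \<Longrightarrow> mono_perm \<sigma> (mono_perm (inv \<sigma>) b) = b"
  by (metis mono_perm_comp mono_perm_id bij_is_surj surj_iff)

interpretation poly_perm: additive "poly_perm \<sigma>"
  by standard (unfold poly_perm_def, rule sum_keys_add, simp_all add: single_add)

lemma poly_perm_single:
  "poly_perm \<sigma> (Poly_Mapping.single m c) = Poly_Mapping.single (mono_perm \<sigma> m) c"
  unfolding poly_perm_def by (rule sum_keys_single) simp

lemma poly_perm_expand:
  "poly_perm \<sigma> p = (\<Sum>m\<in>keys p. poly_perm \<sigma> (Poly_Mapping.single m (lookup p m)))"
  unfolding poly_perm_single by (simp add: poly_perm_def)

lemma poly_perm_mult: "poly_perm \<sigma> (p * q) = poly_perm \<sigma> p * poly_perm \<sigma> q"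
proof -
  have "p * q = (\<Sum>a\<in>keys p. \<Sum>b\<in>keys q. Poly_Mapping.single (a + b) (lookup p a * lookup q b))"
    by (subst (1 2) sum_single_lookup[symmetric]) (simp add: sum_product mult_single)
  then show ?thesis
    by (simp add: poly_perm.sum poly_perm_single poly_perm_expand[of _ p] poly_perm_expand[of _ q]
        sum_product mult_single mono_perm_add)
qed

lemma poly_perm_one: "poly_perm \<sigma> 1 = 1"
  using poly_perm_single[of \<sigma> 0 1] by (simp add: mono_perm_zero)

lemma poly_perm_prod: "poly_perm \<sigma> (prod f A) = (\<Prod>x\<in>A. poly_perm \<sigma> (f x))"
  by (induction A rule: infinite_finite_induct) (simp_all add: poly_perm_one poly_perm_mult)

lemma poly_perm_Xv: "poly_perm \<sigma> (Xv i) = Xv (\<sigma> i)"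
  by (simp add: Xv_def poly_perm_single mono_perm_single)

lemma poly_perm_id: "poly_perm id p = p"
  by (simp add: poly_perm_def mono_perm_id sum_single_lookup)

lemma poly_perm_comp: "poly_perm (\<sigma> \<circ> \<tau>) p = poly_perm \<sigma> (poly_perm \<tau> p)"
  by (simp add: poly_perm_expand[of _ p] poly_perm.sum poly_perm_single mono_perm_comp)

lemma lookup_poly_perm: "inj \<sigma> \<Longrightarrow> lookup (poly_perm \<sigma> p) (mono_perm \<sigma> a) = lookup p a"
  by (simp add: poly_perm_def lookup_sum lookup_single when_def inj_eq inj_mono_perm in_keys_iff)

lemma poly_perm_pderiv_var:
  assumes "bij \<sigma>"
  shows "poly_perm \<sigma> (pderiv_var l p) = pderiv_var (\<sigma> l) (poly_perm \<sigma> p)"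
proof (rule poly_mapping_eqI)
  fix b
  obtain a where b: "b = mono_perm \<sigma> a"
    using mono_perm_inv[OF assms] by metis
  have inj: "inj \<sigma>"
    using assms by (rule bij_is_inj)
  have "b + var_mono (\<sigma> l) = mono_perm \<sigma> (a + var_mono l)"
    by (simp add: b mono_perm_add mono_perm_single)
  then show "lookup (poly_perm \<sigma> (pderiv_var l p)) b = lookup (pderiv_var (\<sigma> l) (poly_perm \<sigma> p)) b"
    by (simp add: b lookup_pderiv_var lookup_poly_perm lookup_mono_perm inj)
qed

lemma poly_perm_pderiv_var_pow:
  "bij \<sigma> \<Longrightarrow> poly_perm \<sigma> ((pderiv_var l ^^ k) p) = (pderiv_var (\<sigma> l) ^^ k) (poly_perm \<sigma> p)"
  by (induction k) (simp_all add: poly_perm_pderiv_var)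

section \<open>Inversions\<close>

definition inversions :: "(nat \<Rightarrow> nat) \<Rightarrow> nat set \<Rightarrow> (nat \<times> nat) set" where
  "inversions \<sigma> I = {(a, b). a \<in> I \<and> b \<in> I \<and> a < b \<and> \<sigma> b < \<sigma> a}"

lemma reorder_sign_inversions: "reorder_sign \<sigma> I = (-1) ^ card (inversions \<sigma> I)"
  by (simp add: reorder_sign_def inversions_def)

lemma finite_inversions: "finite I \<Longrightarrow> finite (inversions \<sigma> I)"
  by (rule finite_subset[of _ "I \<times> I"]) (auto simp: inversions_def)

lemma card_inversions_insert:
  assumes "finite I" "l \<notin> I"
  shows "card (inversions \<sigma> (insert l I)) = card (inversions \<sigma> I) +
    card {a\<in>I. a < l \<and> \<sigma> l < \<sigma> a} + card {a\<in>I. l < a \<and> \<sigma> a < \<sigma> l}"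
proof -
  let ?B = "{a\<in>I. a < l \<and> \<sigma> l < \<sigma> a}" and ?C = "{a\<in>I. l < a \<and> \<sigma> a < \<sigma> l}"
  have "inversions \<sigma> (insert l I) = inversions \<sigma> I \<union> ((\<lambda>a. (a, l)) ` ?B \<union> Pair l ` ?C)"
    by (auto simp: inversions_def)
  moreover have "inversions \<sigma> I \<inter> ((\<lambda>a. (a, l)) ` ?B \<union> Pair l ` ?C) = {}"
    using assms(2) by (auto simp: inversions_def)
  moreover have "card ((\<lambda>a. (a, l)) ` ?B \<union> Pair l ` ?C) = card ?B + card ?C"
    using assms(1) by (subst card_Un_disjoint) (auto simp: card_image inj_on_def)
  ultimately show ?thesis
    using assms(1) by (simp add: card_Un_disjoint finite_inversions)
qed

lemma minus_one_power_eq_if_even_add: "even (a + b) \<Longrightarrow> ((-1) ^ a :: 'a::ring_1) = (-1) ^ b"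
  by (simp add: minus_one_power_iff)

lemma reorder_sign_mult_wsign:
  assumes "finite I" "l \<in> I" "inj \<sigma>"
  shows "reorder_sign \<sigma> I * wsign (I - {l}) l =
    wsign (\<sigma> ` (I - {l})) (\<sigma> l) * reorder_sign \<sigma> (I - {l})"
proof -
  let ?I = "I - {l}"
  let ?X = "{a\<in>?I. a < l \<and> \<sigma> a < \<sigma> l}" and ?B = "{a\<in>?I. a < l \<and> \<sigma> l < \<sigma> a}"
    and ?C = "{a\<in>?I. l < a \<and> \<sigma> a < \<sigma> l}"
  have fin: "finite ?I"
    using assms(1) by simp
  have inv: "card (inversions \<sigma> I) = card (inversions \<sigma> ?I) + card ?B + card ?C"
    using card_inversions_insert[OF fin, of l \<sigma>] assms(2) by (simp add: insert_absorb)
  have "(\<Sum>a\<in>?I. of_bool (a < l) + of_bool (\<sigma> a < \<sigma> l)) =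
      (\<Sum>a\<in>?I. 2 * of_bool (a < l \<and> \<sigma> a < \<sigma> l) + of_bool (a < l \<and> \<sigma> l < \<sigma> a) +
        (of_bool (l < a \<and> \<sigma> a < \<sigma> l) :: nat))"
    using assms(3) by (intro sum.cong refl) (auto simp: inj_eq linorder_neq_iff)
  then have split: "card {a\<in>?I. a < l} + card {a\<in>?I. \<sigma> a < \<sigma> l} = 2 * card ?X + card ?B + card ?C"
    using fin by (simp add: sum.distrib sum_distrib_left[symmetric] Int_def conj_commute)
  have "{y\<in>\<sigma> ` ?I. y < \<sigma> l} = \<sigma> ` {a\<in>?I. \<sigma> a < \<sigma> l}"
    by auto
  then have image: "card {y\<in>\<sigma> ` ?I. y < \<sigma> l} = card {a\<in>?I. \<sigma> a < \<sigma> l}"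
    using assms(3) by (simp add: card_image inj_on_subset)
  have parity: "(card (inversions \<sigma> I) + card {a\<in>?I. a < l}) +
      (card {y\<in>\<sigma> ` ?I. y < \<sigma> l} + card (inversions \<sigma> ?I)) =
      2 * (card (inversions \<sigma> ?I) + card ?X + card ?B + card ?C)"
    unfolding inv image using split by simp
  have "even ((card (inversions \<sigma> I) + card {a\<in>?I. a < l}) +
      (card {y\<in>\<sigma> ` ?I. y < \<sigma> l} + card (inversions \<sigma> ?I)))"
    unfolding parity by simp
  then show ?thesis
    unfolding reorder_sign_inversions wsign_def power_add[symmetric]
    by (rule minus_one_power_eq_if_even_add)
qed

section \<open>The Vandermonde product\<close>

abbreviation lt_pairs :: "nat \<Rightarrow> (nat \<times> nat) set" where
  "lt_pairs n \<equiv> {(i, j). i < j \<and> j < n}"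

lemma finite_lt_pairs: "finite (lt_pairs n)"
  by (rule finite_subset[of _ "{..<n} \<times> {..<n}"]) auto

lemma card_lt_pairs: "card (lt_pairs n) = n choose 2"
proof (induction n)
  case (Suc n)
  have "lt_pairs (Suc n) = lt_pairs n \<union> (\<lambda>i. (i, n)) ` {..<n}"
    by (auto simp: less_Suc_eq)
  moreover have "lt_pairs n \<inter> (\<lambda>i. (i, n)) ` {..<n} = {}"
    by auto
  ultimately have "card (lt_pairs (Suc n)) = card (lt_pairs n) + n"
    using finite_lt_pairs by (simp add: card_Un_disjoint card_image inj_on_def)
  then show ?case
    using Suc by (simp add: numeral_2_eq_2)
qed simp

lemma poly_in_vars_Delta: "poly_in_vars n (Delta n)"
  unfolding Delta_def by (auto intro!: poly_in_vars_prod poly_in_vars_diff poly_in_vars_Xv)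

lemma homogeneous_Delta: "homogeneous (n choose 2) (Delta n)"
  unfolding Delta_def card_lt_pairs[symmetric]
  by (auto intro!: homogeneous_prod homogeneous_diff homogeneous_Xv finite_lt_pairs)

lemma prod_minus_one_if:
  "finite A \<Longrightarrow> (\<Prod>x\<in>A. if P x then - 1 else 1) = ((-1) ^ card {x\<in>A. P x} :: 'a::comm_ring_1)"
proof (induction A rule: finite_induct)
  case (insert x F)
  have "{y\<in>insert x F. P y} = (if P x then insert x {y\<in>F. P y} else {y\<in>F. P y})"
    by auto
  then show ?case
    using insert by simp
qed simp

lemma poly_perm_Delta:
  assumes "\<sigma> permutes {..<n}"
  shows "poly_perm \<sigma> (Delta n) = reorder_sign \<sigma> {..<n} * Delta n"
proof -
  have inj: "\<sigma> x = \<sigma> y \<longleftrightarrow> x = y" for x y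
    using assms by (meson permutes_inj injD)
  have lt: "x < n \<Longrightarrow> \<sigma> x < n" for x
    using permutes_in_image[OF assms, of x] by simp
  define sorted where "sorted = (\<lambda>(i, j). if \<sigma> i < \<sigma> j then (\<sigma> i, \<sigma> j) else (\<sigma> j, \<sigma> i))"
  have "inj_on sorted (lt_pairs n)"
    by (rule inj_onI) (auto simp: sorted_def inj split: if_splits)
  moreover have "sorted ` lt_pairs n \<subseteq> lt_pairs n"
    by (auto simp: sorted_def inj lt split: if_splits) (metis inj less_irrefl linorder_neqE_nat)
  ultimately have bij: "bij_betw sorted (lt_pairs n) (lt_pairs n)"
    using endo_inj_surj[OF finite_lt_pairs] by (simp add: bij_betw_def)
  define F where "F = (\<lambda>(i, j). Xv i - Xv j)"
  have "poly_perm \<sigma> (F x) = (if (case x of (i, j) \<Rightarrow> \<sigma> j < \<sigma> i) then -1 else 1) * F (sorted x)"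
    if "x \<in> lt_pairs n" for x
    using that inj by (cases x) (auto simp: F_def sorted_def poly_perm.diff poly_perm_Xv)
  then have "poly_perm \<sigma> (Delta n) =
      (\<Prod>x\<in>lt_pairs n. if (case x of (i, j) \<Rightarrow> \<sigma> j < \<sigma> i) then -1 else 1) *
      (\<Prod>x\<in>lt_pairs n. F (sorted x))"
    unfolding Delta_def F_def[symmetric] by (simp add: poly_perm_prod prod.distrib)
  also have "(\<Prod>x\<in>lt_pairs n. F (sorted x)) = Delta n"
    unfolding Delta_def F_def[symmetric] using prod.reindex_bij_betw[OF bij] by simp
  also have "{x \<in> lt_pairs n. case x of (i, j) \<Rightarrow> \<sigma> j < \<sigma> i} = inversions \<sigma> {..<n}"
    by (auto simp: inversions_def)
  ultimately show ?thesis
    by (simp add: prod_minus_one_if[OF finite_lt_pairs] reorder_sign_inversions)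
qed

lemma reorder_sign_transpose:
  assumes "a < b" "b < n"
  shows "reorder_sign (transpose a b) {..<n} = -1"
proof -
  let ?A = "(\<lambda>c. (a, c)) ` {a<..<b}" and ?B = "(\<lambda>c. (c, b)) ` {a<..<b}"
  have "inversions (transpose a b) {..<n} = insert (a, b) (?A \<union> ?B)"
    using assms by (auto simp: inversions_def transpose_def split: if_splits)
  moreover have "card (?A \<union> ?B) = 2 * (b - Suc a)"
    by (subst card_Un_disjoint) (auto simp: card_image inj_on_def)
  then have "card (insert (a, b) (?A \<union> ?B)) = Suc (2 * (b - Suc a))"
    by (subst card_insert_disjoint) auto
  ultimately show ?thesis
    by (simp add: reorder_sign_inversions)
qed

lemma poly_perm_Delta_transpose:
  assumes "a < n" "b < n" "a \<noteq> b"
  shows "poly_perm (transpose a b) (Delta n) = - Delta n"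
proof -
  have "poly_perm (transpose a' b') (Delta n) = - Delta n" if "a' < b'" "b' < n" for a' b'
    using that by (simp add: poly_perm_Delta permutes_swap_id reorder_sign_transpose)
  then show ?thesis
    using assms by (metis linorder_neqE_nat transpose_commute)
qed

lemma poly_perm_Delta_sign:
  assumes "\<sigma> permutes {..<n}"
  shows "poly_perm \<sigma> (Delta n) = of_int (sign \<sigma>) * Delta n"
  using assms finite_lessThan[of n]
proof (induction rule: permutes_induct)
  case id
  then show ?case by (simp add: poly_perm_id[unfolded id_def])
next
  case (swap a b \<tau>)
  then have "permutation \<tau>"
    using permutation_permutes by blast
  then have sign: "sign (transpose a b \<circ> \<tau>) = - sign \<tau>"
    using sign_compose[OF permutation_swap_id, of \<tau> a b] sign_swap_id[of a b] swap by simp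
  have "poly_perm (transpose a b \<circ> \<tau>) (Delta n) = poly_perm (transpose a b) (of_int (sign \<tau>) * Delta n)"
    by (simp add: poly_perm_comp swap.IH)
  also have "\<dots> = of_int (sign \<tau>) * - Delta n"
    using swap by (cases \<tau> rule: sign_cases) (simp_all add: poly_perm.minus poly_perm_Delta_transpose)
  also have "\<dots> = of_int (sign (transpose a b \<circ> \<tau>)) * Delta n"
    by (simp add: sign)
  finally show ?case
    by (simp add: comp_def)
qed

section \<open>Alternating polynomials of low degree\<close>

lemma choose_two_le_sum: "finite (S::nat set) \<Longrightarrow> card S choose 2 \<le> \<Sum>S"
proof (induction "card S" arbitrary: S)
  case (Suc k)
  define M where "M = Max S"
  have "S \<noteq> {}"
    using Suc.hyps(2) by auto
  then have M: "M \<in> S" "card (S - {M}) = k"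
    using Suc by (auto simp: M_def)
  have "S \<subseteq> {..M}"
    using Suc.prems by (auto simp: M_def)
  then have "card S \<le> Suc M"
    using card_mono[of "{..M}" S] by simp
  moreover have "k choose 2 \<le> \<Sum>(S - {M})"
    using Suc.hyps(1)[of "S - {M}"] Suc.prems M by simp
  moreover have "\<Sum>S = M + \<Sum>(S - {M})"
    using Suc.prems M by (simp add: sum.remove)
  ultimately show ?case
    using Suc.hyps(2)[symmetric] by (simp add: numeral_2_eq_2)
qed simp

lemma alternating_poly_eq_0:
  assumes alt: "\<And>a b. a < n \<Longrightarrow> b < n \<Longrightarrow> a \<noteq> b \<Longrightarrow> poly_perm (transpose a b) g = - g"
    and vars: "poly_in_vars n g"
    and deg: "\<And>a. a \<in> keys g \<Longrightarrow> mono_deg a < n choose 2"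
  shows "g = 0"
proof (rule ccontr)
  assume "g \<noteq> 0"
  then obtain a where a: "a \<in> keys g"
    by fastforce
  show False
  proof (cases "inj_on (lookup a) {..<n}")
    case True
    have "mono_deg a = \<Sum>(lookup a ` {..<n})"
      using vars a True by (simp add: poly_in_vars_def mono_deg_superset sum.reindex)
    then show False
      using choose_two_le_sum[of "lookup a ` {..<n}"] deg[OF a] True by (simp add: card_image)
  next
    case False
    then obtain i j where ij: "i < n" "j < n" "i \<noteq> j" "lookup a i = lookup a j"
      by (auto simp: inj_on_def)
    have "lookup (mono_perm (transpose i j) a) x = lookup a x" for x
      using lookup_mono_perm[of "transpose i j" a "transpose i j x"] ij(4)
      by (simp add: transpose_def split: if_splits)
    then have "mono_perm (transpose i j) a = a"
      by (simp add: mono_eq_iff)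
    then have "lookup g a = - lookup g a"
      using lookup_poly_perm[of "transpose i j" g a] alt[OF ij(1-3)] by simp
    then show False
      using a by (simp add: in_keys_iff)
  qed
qed

section \<open>Power-sum differential operators\<close>

definition power_sum_deriv :: "nat \<Rightarrow> nat \<Rightarrow> rpoly \<Rightarrow> rpoly" where
  "power_sum_deriv n k f = (\<Sum>i<n. (pderiv_var i ^^ k) f)"

text \<open>All \<open>k \<ge> 1\<close>, not only \<open>k \<le> n\<close> as in \<^const>\<open>Sn_harmonic\<close>: the anticommutator of
  \<open>\<delta>\<^sub>l\<close> and \<open>d\<^sub>m\<close> is \<open>p\<^bsub>l+m\<^esub>(\<partial>)\<close>, and \<open>l + m\<close> may exceed \<open>n\<close>.\<close>

definition power_sum_harmonic :: "nat \<Rightarrow> rpoly \<Rightarrow> bool" where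
  "power_sum_harmonic n f \<longleftrightarrow> (\<forall>k\<ge>1. power_sum_deriv n k f = 0)"

interpretation power_sum_deriv: additive "power_sum_deriv n k"
  by standard (simp add: power_sum_deriv_def pderiv_var_pow.add sum.distrib)

lemma power_sum_deriv_pderiv_var_pow:
  "power_sum_deriv n k ((pderiv_var j ^^ m) p) = (pderiv_var j ^^ m) (power_sum_deriv n k p)"
  by (simp add: power_sum_deriv_def pderiv_var_pow.sum pderiv_var_pow_commute)

lemma poly_perm_power_sum_deriv:
  assumes "\<sigma> permutes {..<n}"
  shows "poly_perm \<sigma> (power_sum_deriv n k f) = power_sum_deriv n k (poly_perm \<sigma> f)"
proof -
  have "poly_perm \<sigma> (power_sum_deriv n k f) = (\<Sum>i<n. (pderiv_var (\<sigma> i) ^^ k) (poly_perm \<sigma> f))"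
    using permutes_bij[OF assms] by (simp add: power_sum_deriv_def poly_perm.sum poly_perm_pderiv_var_pow)
  also have "\<dots> = power_sum_deriv n k (poly_perm \<sigma> f)"
    using sum.permute[OF assms, of "\<lambda>i. (pderiv_var i ^^ k) (poly_perm \<sigma> f)"]
    by (simp add: power_sum_deriv_def)
  finally show ?thesis .
qed

lemma power_sum_harmonic_imp_Sn_harmonic: "power_sum_harmonic n f \<Longrightarrow> Sn_harmonic n f"
  by (simp add: power_sum_harmonic_def Sn_harmonic_def power_sum_deriv_def)

lemma power_sum_harmonic_zero: "power_sum_harmonic n 0"
  by (simp add: power_sum_harmonic_def power_sum_deriv.zero)

lemma power_sum_harmonic_add:
  "power_sum_harmonic n p \<Longrightarrow> power_sum_harmonic n q \<Longrightarrow> power_sum_harmonic n (p + q)"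
  by (simp add: power_sum_harmonic_def power_sum_deriv.add)

lemma power_sum_harmonic_uminus: "power_sum_harmonic n p \<Longrightarrow> power_sum_harmonic n (- p)"
  by (simp add: power_sum_harmonic_def power_sum_deriv.minus)

lemma power_sum_harmonic_pderiv_var_pow:
  "power_sum_harmonic n p \<Longrightarrow> power_sum_harmonic n ((pderiv_var l ^^ m) p)"
  by (simp add: power_sum_harmonic_def power_sum_deriv_pderiv_var_pow pderiv_var_pow.zero)

lemma power_sum_harmonic_Delta: "power_sum_harmonic n (Delta n)"
  unfolding power_sum_harmonic_def
proof (intro allI impI)
  fix k :: nat assume k: "1 \<le> k"
  show "power_sum_deriv n k (Delta n) = 0"
  proof (rule alternating_poly_eq_0)
    fix a b assume ab: "a < n" "b < n" "a \<noteq> b"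
    then have "transpose a b permutes {..<n}"
      by (simp add: permutes_swap_id)
    then show "poly_perm (transpose a b) (power_sum_deriv n k (Delta n)) = - power_sum_deriv n k (Delta n)"
      by (simp only: poly_perm_power_sum_deriv poly_perm_Delta_transpose[OF ab] power_sum_deriv.minus)
  next
    show "poly_in_vars n (power_sum_deriv n k (Delta n))"
      unfolding power_sum_deriv_def
      by (rule sum_closed[of "poly_in_vars n"])
        (simp_all add: poly_in_vars_zero poly_in_vars_add poly_in_vars_pderiv_var_pow poly_in_vars_Delta)
  next
    fix a assume "a \<in> keys (power_sum_deriv n k (Delta n))"
    then obtain i where "a \<in> keys ((pderiv_var i ^^ k) (Delta n))"
      using keys_sum[of "\<lambda>i. (pderiv_var i ^^ k) (Delta n)" "{..<n}"]
      unfolding power_sum_deriv_def by blast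
    then have "mono_deg a + k = n choose 2"
      by (rule mono_deg_keys_pderiv_var_pow[OF homogeneous_Delta])
    then show "mono_deg a < n choose 2"
      using k by simp
  qed
qed

section \<open>The operators \<open>d\<^sub>m\<close> and \<open>\<delta>\<^sub>l\<close>\<close>

lemma wsign_mult_commute:
  "additive f \<Longrightarrow> f (wsign S x * p) = wsign S x * f p"
  unfolding wsign_def by (rule additive_minus_one_power_mult)

lemma wsign_mult_wsign: "wsign S x * (wsign S x * p) = p"
  by (simp add: wsign_def mult.assoc[symmetric] power_add[symmetric])

lemma card_less_insert:
  assumes "finite S" "x \<notin> S"
  shows "card {y\<in>insert x S. y < (z::nat)} = card {y\<in>S. y < z} + (if x < z then 1 else 0)"
proof -
  have "{y\<in>insert x S. y < z} = (if x < z then insert x {y\<in>S. y < z} else {y\<in>S. y < z})"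
    by auto
  then show ?thesis
    using assms by simp
qed

lemma wsign_exchange:
  assumes "finite J" "i \<in> J" "j \<notin> J"
  shows "wsign J j * wsign (insert j (J - {i})) i = - (wsign (J - {i}) i * wsign (J - {i}) j)"
proof -
  have "J = insert i (J - {i})"
    using assms by auto
  then have "card {y\<in>J. y < j} = card {y\<in>J - {i}. y < j} + (if i < j then 1 else 0)"
    using assms card_less_insert[of "J - {i}" i j] by simp
  moreover have "card {y\<in>insert j (J - {i}). y < i} = card {y\<in>J - {i}. y < i} + (if j < i then 1 else 0)"
    by (rule card_less_insert) (use assms in auto)
  moreover have "i \<noteq> j"
    using assms by auto
  ultimately have "card {y\<in>J. y < j} + card {y\<in>insert j (J - {i}). y < i} =
      Suc (card {y\<in>J - {i}. y < i} + card {y\<in>J - {i}. y < j})"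
    by auto
  then show ?thesis
    unfolding wsign_def power_add[symmetric] by simp
qed

lemma dop_insert:
  assumes "insert j J \<subseteq> {..<n}" "j \<notin> J"
  shows "dop n m \<omega> (insert j J) = wsign J j * (pderiv_var j ^^ m) (\<omega> J) +
    (\<Sum>i\<in>J. wsign (insert j (J - {i})) i * (pderiv_var i ^^ m) (\<omega> (insert j (J - {i}))))"
proof -
  have "finite J"
    using assms(1) finite_subset by auto
  moreover have "insert j J - {i} = insert j (J - {i})" if "i \<in> J" for i
    using that assms(2) by auto
  ultimately show ?thesis
    using assms by (simp add: dop_def insert_Diff_if)
qed

lemma deltaop_remove:
  assumes "J \<subseteq> {..<n}" "i \<in> J"
  shows "deltaop n l \<omega> (J - {i}) = wsign (J - {i}) i * (pderiv_var i ^^ l) (\<omega> J) +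
    (\<Sum>j\<in>{..<n} - J. wsign (J - {i}) j * (pderiv_var j ^^ l) (\<omega> (insert j (J - {i}))))"
proof -
  have "{..<n} - (J - {i}) = insert i ({..<n} - J)" "insert i (J - {i}) = J" "J - {i} \<subseteq> {..<n}"
    using assms by auto
  then show ?thesis
    using assms by (simp add: deltaop_def)
qed

lemma deltaop_dop:
  assumes "J \<subseteq> {..<n}"
  shows "deltaop n l (dop n m \<omega>) J = (\<Sum>j\<in>{..<n} - J. (pderiv_var j ^^ (l + m)) (\<omega> J) +
    (\<Sum>i\<in>J. wsign J j * wsign (insert j (J - {i})) i *
      (pderiv_var j ^^ l) ((pderiv_var i ^^ m) (\<omega> (insert j (J - {i}))))))"
  unfolding deltaop_def using assms
proof (simp, intro sum.cong refl)
  fix j assume "j \<in> {..<n} - J"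
  then have "dop n m \<omega> (insert j J) = wsign J j * (pderiv_var j ^^ m) (\<omega> J) +
    (\<Sum>i\<in>J. wsign (insert j (J - {i})) i * (pderiv_var i ^^ m) (\<omega> (insert j (J - {i}))))"
    using assms by (intro dop_insert) auto
  then show "wsign J j * (pderiv_var j ^^ l) (dop n m \<omega> (insert j J)) =
    (pderiv_var j ^^ (l + m)) (\<omega> J) + (\<Sum>i\<in>J. wsign J j * wsign (insert j (J - {i})) i *
      (pderiv_var j ^^ l) ((pderiv_var i ^^ m) (\<omega> (insert j (J - {i})))))"
    by (simp add: pderiv_var_pow.add pderiv_var_pow.sum wsign_mult_commute[OF pderiv_var_pow.additive_axioms]
        wsign_mult_wsign distrib_left sum_distrib_left funpow_add mult.assoc)
qed

lemma dop_deltaop: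
  assumes "J \<subseteq> {..<n}"
  shows "dop n m (deltaop n l \<omega>) J = (\<Sum>i\<in>J. (pderiv_var i ^^ (l + m)) (\<omega> J) +
    (\<Sum>j\<in>{..<n} - J. wsign (J - {i}) i * wsign (J - {i}) j *
      (pderiv_var i ^^ m) ((pderiv_var j ^^ l) (\<omega> (insert j (J - {i}))))))"
  unfolding dop_def using assms
proof (simp, intro sum.cong refl)
  fix i assume "i \<in> J"
  then show "wsign (J - {i}) i * (pderiv_var i ^^ m) (deltaop n l \<omega> (J - {i})) =
    (pderiv_var i ^^ (l + m)) (\<omega> J) + (\<Sum>j\<in>{..<n} - J. wsign (J - {i}) i * wsign (J - {i}) j *
      (pderiv_var i ^^ m) ((pderiv_var j ^^ l) (\<omega> (insert j (J - {i})))))"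
    using assms
    by (simp add: deltaop_remove pderiv_var_pow.add pderiv_var_pow.sum
        wsign_mult_commute[OF pderiv_var_pow.additive_axioms] wsign_mult_wsign distrib_left
        sum_distrib_left add.commute[of l m] funpow_add mult.assoc)
qed

lemma deltaop_dop_anticommute:
  assumes J: "J \<subseteq> {..<n}"
  shows "deltaop n l (dop n m \<omega>) J + dop n m (deltaop n l \<omega>) J = power_sum_deriv n (l + m) (\<omega> J)"
proof -
  let ?A = "{..<n} - J"
  define T1 where "T1 i j = wsign J j * wsign (insert j (J - {i})) i *
    (pderiv_var j ^^ l) ((pderiv_var i ^^ m) (\<omega> (insert j (J - {i}))))" for i j
  define T2 where "T2 i j = wsign (J - {i}) i * wsign (J - {i}) j *
    (pderiv_var i ^^ m) ((pderiv_var j ^^ l) (\<omega> (insert j (J - {i}))))" for i j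
  have fin: "finite J"
    using J finite_subset by blast
  have "T1 i j + T2 i j = 0" if "i \<in> J" "j \<in> ?A" for i j
    using wsign_exchange[OF fin that(1)] that by (simp add: T1_def T2_def pderiv_var_pow_commute)
  then have "(\<Sum>j\<in>?A. \<Sum>i\<in>J. T1 i j) + (\<Sum>i\<in>J. \<Sum>j\<in>?A. T2 i j) = 0"
    by (simp add: sum.swap[of _ ?A J] sum.distrib[symmetric])
  moreover have "{..<n} = ?A \<union> J" "?A \<inter> J = {}"
    using J by auto
  then have "power_sum_deriv n (l + m) (\<omega> J) =
      (\<Sum>j\<in>?A. (pderiv_var j ^^ (l + m)) (\<omega> J)) + (\<Sum>i\<in>J. (pderiv_var i ^^ (l + m)) (\<omega> J))"
    unfolding power_sum_deriv_def by (metis finite_Diff finite_lessThan fin sum.union_disjoint)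
  ultimately show ?thesis
    unfolding deltaop_dop[OF J] dop_deltaop[OF J] sum.distrib T1_def[symmetric] T2_def[symmetric]
    by (simp add: algebra_simps)
qed

section \<open>Permutations acting on forms\<close>

lemma reorder_sign_mult_commute:
  "additive f \<Longrightarrow> f (reorder_sign \<sigma> I * p) = reorder_sign \<sigma> I * f p"
  unfolding reorder_sign_def by (rule additive_minus_one_power_mult)

lemma form_perm_image:
  assumes "\<sigma> permutes {..<n}" "I \<subseteq> {..<n}"
  shows "form_perm n \<sigma> \<omega> (\<sigma> ` I) = reorder_sign \<sigma> I * poly_perm \<sigma> (\<omega> I)"
proof -
  have "\<sigma> ` I \<subseteq> {..<n}"
    using assms permutes_image by blast
  moreover have "inv \<sigma> ` \<sigma> ` I = I"
    using permutes_inj[OF assms(1)] by (simp add: image_image)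
  ultimately show ?thesis
    by (simp add: form_perm_def)
qed

lemma form_perm_dop:
  assumes \<sigma>: "\<sigma> permutes {..<n}"
  shows "form_perm n \<sigma> (dop n m \<omega>) = dop n m (form_perm n \<sigma> \<omega>)"
proof
  fix J
  show "form_perm n \<sigma> (dop n m \<omega>) J = dop n m (form_perm n \<sigma> \<omega>) J"
  proof (cases "J \<subseteq> {..<n}")
    case False
    then show ?thesis
      by (simp add: form_perm_def dop_def)
  next
    case True
    define I where "I = inv \<sigma> ` J"
    have J: "J = \<sigma> ` I"
      using permutes_surj[OF \<sigma>] by (simp add: I_def image_image surj_f_inv_f)
    have I: "I \<subseteq> {..<n}"
      using True permutes_image[OF permutes_inv[OF \<sigma>]] by (auto simp: I_def)
    have inj: "inj \<sigma>" and bij: "bij \<sigma>"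
      using \<sigma> by (simp_all add: permutes_inj permutes_bij)
    have "form_perm n \<sigma> (dop n m \<omega>) J = (\<Sum>l\<in>I. reorder_sign \<sigma> I * wsign (I - {l}) l *
        (pderiv_var (\<sigma> l) ^^ m) (poly_perm \<sigma> (\<omega> (I - {l}))))"
      using I bij
      by (simp add: J form_perm_image[OF \<sigma> I] dop_def poly_perm.sum poly_perm_pderiv_var_pow
          wsign_mult_commute[OF poly_perm.additive_axioms] sum_distrib_left mult.assoc)
    also have "\<dots> = (\<Sum>l\<in>I. wsign (\<sigma> ` (I - {l})) (\<sigma> l) *
        (pderiv_var (\<sigma> l) ^^ m) (form_perm n \<sigma> \<omega> (\<sigma> ` (I - {l}))))"
    proof (intro sum.cong refl)
      fix l assume "l \<in> I"
      moreover have "I - {l} \<subseteq> {..<n}" "finite I"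
        using I finite_subset by auto
      ultimately show "reorder_sign \<sigma> I * wsign (I - {l}) l *
          (pderiv_var (\<sigma> l) ^^ m) (poly_perm \<sigma> (\<omega> (I - {l}))) =
        wsign (\<sigma> ` (I - {l})) (\<sigma> l) * (pderiv_var (\<sigma> l) ^^ m) (form_perm n \<sigma> \<omega> (\<sigma> ` (I - {l})))"
        by (simp add: reorder_sign_mult_wsign inj form_perm_image[OF \<sigma>]
            reorder_sign_mult_commute[OF pderiv_var_pow.additive_axioms] mult.assoc)
    qed
    also have "\<dots> = dop n m (form_perm n \<sigma> \<omega>) J"
      using True inj by (simp add: J dop_def sum.reindex inj_on_subset image_set_diff)
    finally show ?thesis .
  qed
qed

section \<open>The forms \<open>\<omega>\<close>\<close>

lemma dop_coeff_closed:
  assumes "Q 0" "\<And>p q. Q p \<Longrightarrow> Q q \<Longrightarrow> Q (p + q)" "\<And>p. Q p \<Longrightarrow> Q (- p)"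
    and "\<And>I l. Q ((pderiv_var l ^^ m) (\<omega> I))"
  shows "Q (dop n m \<omega> J)"
proof -
  have "Q (wsign S l * p)" if "Q p" for S l p
    using that assms(3) by (simp add: wsign_def minus_one_power_iff)
  then show ?thesis
    unfolding dop_def using assms by (auto intro: sum_closed[of Q])
qed

lemma dop_uminus: "dop n m (\<lambda>I. - \<omega> I) = (\<lambda>J. - dop n m \<omega> J)"
  by (simp add: fun_eq_iff dop_def pderiv_var_pow.minus sum_negf)

lemma omega_form_Nil: "omega_form n [] = Delta_form n"
  by (simp add: omega_form_def)

lemma omega_form_Cons: "omega_form n (m # ms) = dop n m (omega_form n ms)"
  by (simp add: omega_form_def)

lemma omega_form_support:
  "omega_form n ms I \<noteq> 0 \<Longrightarrow> I \<subseteq> {..<n} \<and> card I = length ms"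
proof (induction ms arbitrary: I)
  case Nil
  then show ?case
    by (simp add: omega_form_Nil Delta_form_def split: if_splits)
next
  case (Cons m ms)
  then have "I \<subseteq> {..<n}" and "\<exists>l\<in>I. omega_form n ms (I - {l}) \<noteq> 0"
    by (auto simp: omega_form_Cons dop_def pderiv_var_pow.zero split: if_splits intro: ccontr)
  then obtain l where "l \<in> I" "card (I - {l}) = length ms"
    using Cons.IH by blast
  moreover have "finite I"
    using \<open>I \<subseteq> {..<n}\<close> finite_subset by blast
  ultimately have "card I = Suc (length ms)"
    using card_Suc_Diff1 by metis
  with \<open>I \<subseteq> {..<n}\<close> show ?case
    by simp
qed

lemma omega_form_coeff_closed:
  assumes "Q (Delta n)" "Q 0" "\<And>p q. Q p \<Longrightarrow> Q q \<Longrightarrow> Q (p + q)" "\<And>p. Q p \<Longrightarrow> Q (- p)"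
    and "\<And>p l m. Q p \<Longrightarrow> Q ((pderiv_var l ^^ m) p)"
  shows "Q (omega_form n ms I)"
proof (induction ms arbitrary: I)
  case Nil
  then show ?case
    using assms(1,2) by (simp add: omega_form_Nil Delta_form_def)
next
  case (Cons m ms)
  show ?case
    unfolding omega_form_Cons
    by (rule dop_coeff_closed, fact assms(2), erule (1) assms(3), erule assms(4),
        rule assms(5), rule Cons.IH)
qed

lemma poly_in_vars_omega_form: "poly_in_vars n (omega_form n ms I)"
  by (rule omega_form_coeff_closed[of "poly_in_vars n"]) (simp_all add: poly_in_vars_Delta poly_in_vars_zero
      poly_in_vars_add poly_in_vars_uminus poly_in_vars_pderiv_var_pow)

lemma power_sum_harmonic_omega_form: "power_sum_harmonic n (omega_form n ms I)"
  by (rule omega_form_coeff_closed[of "power_sum_harmonic n"]) (simp_all add: power_sum_harmonic_Delta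
      power_sum_harmonic_pderiv_var_pow power_sum_harmonic_zero power_sum_harmonic_add
      power_sum_harmonic_uminus)

lemma homogeneous_omega_form:
  "homogeneous ((n choose 2) - sum_list ms) (omega_form n ms I)"
proof (induction ms arbitrary: I)
  case Nil
  then show ?case
    by (simp add: omega_form_Nil Delta_form_def homogeneous_Delta homogeneous_zero)
next
  case (Cons m ms)
  have "homogeneous ((n choose 2) - sum_list ms - m) (dop n m (omega_form n ms) I)"
    by (rule dop_coeff_closed, rule homogeneous_zero, erule (1) homogeneous_add,
        erule homogeneous_uminus, rule homogeneous_pderiv_var_pow, rule Cons.IH)
  then show ?case
    by (simp add: omega_form_Cons add.commute)
qed

lemma deltaop_omega_form:
  assumes "\<forall>m\<in>set ms. 1 \<le> m"
  shows "deltaop n l (omega_form n ms) = (\<lambda>_. 0)"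
  using assms
proof (induction ms)
  case Nil
  show ?case
    by (simp add: fun_eq_iff omega_form_Nil deltaop_def Delta_form_def pderiv_var_pow.zero)
next
  case (Cons m ms)
  have IH: "deltaop n l (omega_form n ms) = (\<lambda>_. 0)" and "1 \<le> m"
    using Cons by simp_all
  have "deltaop n l (dop n m (omega_form n ms)) J = 0" for J
  proof (cases "J \<subseteq> {..<n}")
    case True
    have "power_sum_deriv n (l + m) (omega_form n ms J) = 0"
      using power_sum_harmonic_omega_form \<open>1 \<le> m\<close> by (simp add: power_sum_harmonic_def)
    moreover have "dop n m (deltaop n l (omega_form n ms)) J = 0"
      unfolding IH by (simp add: dop_def pderiv_var_pow.zero)
    ultimately show ?thesis
      using deltaop_dop_anticommute[OF True, of l m "omega_form n ms"] by simp
  qed (simp add: deltaop_def)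
  then show ?case
    unfolding omega_form_Cons by blast
qed

lemma form_perm_omega_form:
  assumes "\<sigma> permutes {..<n}"
  shows "form_perm n \<sigma> (omega_form n ms) = (\<lambda>I. of_int (sign \<sigma>) * omega_form n ms I)"
proof (induction ms)
  case Nil
  show ?case
    using assms by (auto simp: fun_eq_iff omega_form_Nil form_perm_def Delta_form_def
        poly_perm_Delta_sign reorder_sign_def poly_perm.zero)
next
  case (Cons m ms)
  then show ?case
    using assms by (cases \<sigma> rule: sign_cases) (simp_all add: omega_form_Cons form_perm_dop dop_uminus)
qed

theorem lemma10:
  fixes n :: nat and ms :: "nat list"
  assumes "sorted_wrt (>) ms"
    and "\<forall>m\<in>set ms. 1 \<le> m \<and> m \<le> n - 1"
  shows "omega_form n ms \<in> Hspace n ((n choose 2) - sum_list ms) (length ms)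
    \<and> (\<forall>\<sigma>. \<sigma> permutes {..<n} \<longrightarrow>
          form_perm n \<sigma> (omega_form n ms) = (\<lambda>I. of_int (sign \<sigma>) * omega_form n ms I))"
proof
  have "\<forall>m\<in>set ms. 1 \<le> m"
    using assms(2) by blast
  then show "omega_form n ms \<in> Hspace n ((n choose 2) - sum_list ms) (length ms)"
    unfolding Hspace_def in_Omega_def
    using omega_form_support poly_in_vars_omega_form homogeneous_omega_form deltaop_omega_form
      power_sum_harmonic_imp_Sn_harmonic[OF power_sum_harmonic_omega_form]
    by blast
  show "\<forall>\<sigma>. \<sigma> permutes {..<n} \<longrightarrow>
      form_perm n \<sigma> (omega_form n ms) = (\<lambda>I. of_int (sign \<sigma>) * omega_form n ms I)"
    using form_perm_omega_form by blast
qed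

end
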